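(* Let $H_1,H_2$ be linear subspaces of $\mathbb{R}^n$. The primitive quartics $h_{4,H_1}$ and $h_{4,H_2}$ are congruent if and only if either $\dim H_1=\dim H_2$ or $\dim H_1=n-\dim H_2$.
   Context: $\mathbb{R}^n$ carries the standard Euclidean inner product and norm $|\cdot|$. For a linear subspace $H\subseteq\mathbb{R}^n$, write $\xi,\eta$ for the orthogonal projections of $x$ onto $H$ and $H^\perp$, and set $h_{4,H}(x)=|\xi|^4-6|\xi|^2|\eta|^2+|\eta|^4$. Two polynomials $f_1,f_2$ on $\mathbb{R}^n$ are congruent if there is an orthogonal transformation $U\in O(n)$ and $\epsilon\in\{1,-1\}$ with $f_2(x)=\epsilon f_1(Ux)$ for all $x$. *)

theory Defs
  imports "HOL-Analysis.Analysis"
begin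

definition proj_sub :: "'a::euclidean_space set \<Rightarrow> 'a \<Rightarrow> 'a" where
  "proj_sub H x = (THE y. y \<in> H \<and> (\<forall>z\<in>H. orthogonal (x - y) z))"

definition h4 :: "'a::euclidean_space set \<Rightarrow> 'a \<Rightarrow> real" where
  "h4 H x = (let \<xi> = proj_sub H x; \<eta> = x - proj_sub H x in
     norm \<xi> ^ 4 - 6 * norm \<xi> ^ 2 * norm \<eta> ^ 2 + norm \<eta> ^ 4)"

definition congruent_fun :: "('a::euclidean_space \<Rightarrow> real) \<Rightarrow> ('a \<Rightarrow> real) \<Rightarrow> bool" where
  "congruent_fun f1 f2 \<longleftrightarrow>
     (\<exists>U \<epsilon>. orthogonal_transformation U \<and> \<epsilon> \<in> {1, -1} \<and> (\<forall>x. f2 x = \<epsilon> * f1 (U x)))"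

end

theory Submission
  imports Defs
begin

text \<open>With \<open>t = |x|\<^sup>2\<close> and \<open>a = |\<xi>|\<^sup>2\<close>, Pythagoras gives \<open>|\<eta>|\<^sup>2 = t - a\<close> and hence
  \<open>h4 H x = t\<^sup>2 - 8 a (t - a)\<close>, which equals \<open>|x|\<^sup>4\<close> exactly on \<open>H \<union> H\<^sup>\<bottom>\<close>. The defining
  formula is symmetric in \<open>\<xi>\<close> and \<open>\<eta>\<close>, so \<open>h4 H = h4 H\<^sup>\<bottom>\<close>; together with an orthogonal map
  carrying one subspace onto another of the same dimension this gives the congruences.
  Conversely, after absorbing the orthogonal map a congruence reads \<open>h4 K = \<epsilon> h4 G\<close>. For
  \<open>\<epsilon> = 1\<close> each of \<open>G, G\<^sup>\<bottom>\<close> lies in \<open>K \<union> K\<^sup>\<bottom>\<close>, hence in one of the two, and symmetrically;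
  the resulting dimension inequalities leave only \<open>dim G \<in> {dim K, n - dim K}\<close>. For
  \<open>\<epsilon> = -1\<close> the sets \<open>G \<inter> K\<close> and \<open>G\<^sup>\<bottom> \<inter> K\<^sup>\<bottom>\<close> are trivial, which forces \<open>dim G + dim K = n\<close>.\<close>

lemma proj_sub_eqI:
  assumes H: "subspace H" and "y \<in> H" and orth: "\<And>z. z \<in> H \<Longrightarrow> orthogonal (x - y) z"
  shows "proj_sub H x = y"
  unfolding proj_sub_def
proof (rule the_equality)
  show "y \<in> H \<and> (\<forall>z\<in>H. orthogonal (x - y) z)"
    using assms by blast
next
  fix y' assume y': "y' \<in> H \<and> (\<forall>z\<in>H. orthogonal (x - y') z)"
  then have "y' - y \<in> H"
    using \<open>y \<in> H\<close> H by (simp add: subspace_diff)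
  then have "orthogonal (x - y) (y' - y)" "orthogonal (x - y') (y' - y)"
    using orth y' by auto
  then have "orthogonal (y' - y) (y' - y)"
    by (simp add: orthogonal_def inner_diff_left)
  then show "y' = y"
    by (simp add: orthogonal_self)
qed

lemma
  assumes H: "subspace H"
  shows proj_sub_in: "proj_sub H x \<in> H"
    and diff_proj_sub_in_orthogonal_comp: "x - proj_sub H x \<in> H\<^sup>\<bottom>"
proof -
  obtain y z where "y \<in> span H" "\<And>w. w \<in> span H \<Longrightarrow> orthogonal z w" "x = y + z"
    using orthogonal_subspace_decomp_exists by blast
  moreover have "span H = H"
    using H by (simp add: span_eq_iff)
  ultimately have "y \<in> H" "\<And>w. w \<in> H \<Longrightarrow> orthogonal (x - y) w"
    by auto
  moreover from this have "proj_sub H x = y"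
    by (rule proj_sub_eqI[OF H])
  ultimately show "proj_sub H x \<in> H" "x - proj_sub H x \<in> H\<^sup>\<bottom>"
    by (auto simp: orthogonal_comp_def orthogonal_commute)
qed

lemma proj_sub_orthogonal_comp:
  assumes H: "subspace H"
  shows "proj_sub (H\<^sup>\<bottom>) x = x - proj_sub H x"
  using proj_sub_in[OF H] diff_proj_sub_in_orthogonal_comp[OF H]
  by (intro proj_sub_eqI subspace_orthogonal_comp) (auto simp: orthogonal_comp_def)

lemma proj_sub_id:
  assumes "subspace H" "x \<in> H"
  shows "proj_sub H x = x"
  using assms by (intro proj_sub_eqI) (auto simp: orthogonal_clauses)

lemma proj_sub_eq_0:
  assumes "subspace H" "x \<in> H\<^sup>\<bottom>"
  shows "proj_sub H x = 0"
  using assms by (intro proj_sub_eqI) (auto simp: orthogonal_comp_def orthogonal_commute subspace_0)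

lemma norm_proj_sub_Pythagorean:
  assumes H: "subspace H"
  shows "norm x ^ 2 = norm (proj_sub H x) ^ 2 + norm (x - proj_sub H x) ^ 2"
proof -
  have "orthogonal (proj_sub H x) (x - proj_sub H x)"
    using proj_sub_in[OF H] diff_proj_sub_in_orthogonal_comp[OF H]
    by (auto simp: orthogonal_comp_def)
  then show ?thesis
    using norm_add_Pythagorean by fastforce
qed

lemma linear_proj_sub:
  assumes H: "subspace H"
  shows "linear (proj_sub H)"
proof
  fix x y
  have "x - proj_sub H x + (y - proj_sub H y) \<in> H\<^sup>\<bottom>"
    using diff_proj_sub_in_orthogonal_comp[OF H] subspace_orthogonal_comp by (blast intro: subspace_add)
  then show "proj_sub H (x + y) = proj_sub H x + proj_sub H y"
    using proj_sub_in[OF H] subspace_add[OF H]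
    by (intro proj_sub_eqI[OF H]) (auto simp: orthogonal_comp_def orthogonal_commute algebra_simps)
next
  fix c :: real and x
  have "c *\<^sub>R (x - proj_sub H x) \<in> H\<^sup>\<bottom>"
    using diff_proj_sub_in_orthogonal_comp[OF H] subspace_orthogonal_comp by (blast intro: subspace_scale)
  then show "proj_sub H (c *\<^sub>R x) = c *\<^sub>R proj_sub H x"
    using proj_sub_in[OF H] subspace_scale[OF H]
    by (intro proj_sub_eqI[OF H]) (auto simp: orthogonal_comp_def orthogonal_commute scaleR_diff_right)
qed

lemma proj_sub_image_orthogonal_transformation:
  assumes U: "orthogonal_transformation U" and H: "subspace H"
  shows "proj_sub (U ` H) (U x) = U (proj_sub H x)"
proof (rule proj_sub_eqI)
  have lin: "linear U"
    using U orthogonal_transformation_linear by blast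
  show "subspace (U ` H)"
    using H lin by (simp add: linear_subspace_image)
  show "U (proj_sub H x) \<in> U ` H"
    using proj_sub_in[OF H] by blast
  fix z assume "z \<in> U ` H"
  then obtain w where "w \<in> H" "z = U w"
    by blast
  moreover have "orthogonal (U (x - proj_sub H x)) (U w)"
    using \<open>w \<in> H\<close> diff_proj_sub_in_orthogonal_comp[OF H] U
    by (auto simp: orthogonal_comp_def orthogonal_commute orthogonal_orthogonal_transformation)
  ultimately show "orthogonal (U x - U (proj_sub H x)) z"
    by (simp add: linear_diff[OF lin])
qed

lemma h4_eq:
  assumes H: "subspace H"
  shows "h4 H x = norm x ^ 4 - 8 * norm (proj_sub H x) ^ 2 * (norm x ^ 2 - norm (proj_sub H x) ^ 2)"
proof -
  define a b where "a = norm (proj_sub H x) ^ 2" and "b = norm (x - proj_sub H x) ^ 2"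
  have h4_ab: "h4 H x = a ^ 2 - 6 * a * b + b ^ 2"
    by (simp add: h4_def Let_def a_def b_def flip: power_mult)
  have norm2: "norm x ^ 2 = a + b"
    unfolding a_def b_def by (rule norm_proj_sub_Pythagorean[OF H])
  have norm4: "norm x ^ 4 = (a + b) ^ 2"
    unfolding norm2[symmetric] by (simp flip: power_mult)
  show ?thesis
    unfolding a_def[symmetric] h4_ab norm2 norm4 by (simp add: power2_eq_square algebra_simps)
qed

lemma h4_orthogonal_comp:
  assumes "subspace H"
  shows "h4 (H\<^sup>\<bottom>) = h4 H"
  by (rule ext) (simp add: h4_def Let_def proj_sub_orthogonal_comp[OF assms] algebra_simps)

lemma h4_image_orthogonal_transformation:
  assumes U: "orthogonal_transformation U" and H: "subspace H"
  shows "h4 (U ` H) (U x) = h4 H x"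
  using orthogonal_transformation_norm[OF U]
    linear_diff[OF orthogonal_transformation_linear[OF U], of x "proj_sub H x", symmetric]
  by (simp add: h4_def Let_def proj_sub_image_orthogonal_transformation[OF assms])

lemma h4_eq_norm_pow4_iff:
  assumes H: "subspace H"
  shows "h4 H x = norm x ^ 4 \<longleftrightarrow> x \<in> H \<or> x \<in> H\<^sup>\<bottom>"
proof -
  have "h4 H x = norm x ^ 4 \<longleftrightarrow> proj_sub H x = 0 \<or> norm (x - proj_sub H x) = 0"
    using h4_eq[OF H, of x] norm_proj_sub_Pythagorean[OF H, of x] by auto
  also have "\<dots> \<longleftrightarrow> x \<in> H\<^sup>\<bottom> \<or> x \<in> H"
    using proj_sub_eq_0[OF H] proj_sub_id[OF H] proj_sub_in[OF H]
      diff_proj_sub_in_orthogonal_comp[OF H, of x]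
    by (metis diff_zero eq_iff_diff_eq_0 norm_eq_zero)
  finally show ?thesis
    by blast
qed

lemma dim_orthogonal_comp:
  fixes H :: "'a::euclidean_space set"
  assumes "subspace H"
  shows "dim (H\<^sup>\<bottom>) = DIM('a) - dim H"
proof -
  have "dim {y \<in> UNIV. \<forall>x\<in>H. orthogonal x y} + dim H = DIM('a)"
    using dim_subspace_orthogonal_to_vectors[OF assms subspace_UNIV] by simp
  then show ?thesis
    by (simp add: orthogonal_comp_def)
qed

lemma dim_add_le_DIM_if_Int_eq_0:
  fixes S T :: "'a::euclidean_space set"
  assumes "subspace S" "subspace T" "S \<inter> T = {0}"
  shows "dim S + dim T \<le> DIM('a)"
  using dim_sums_Int[OF assms(1,2)] dim_subset_UNIV[of "{x + y |x y. x \<in> S \<and> y \<in> T}"] assms(3)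
  by simp

lemma subspace_subset_Un_subspaces:
  assumes S: "subspace S" and A: "subspace A" and B: "subspace B" and "S \<subseteq> A \<union> B"
  shows "S \<subseteq> A \<or> S \<subseteq> B"
proof (rule ccontr)
  assume "\<not> ?thesis"
  then obtain u v where u: "u \<in> S" "u \<notin> A" and v: "v \<in> S" "v \<notin> B"
    by blast
  then have "u \<in> B" "v \<in> A" "u + v \<in> A \<union> B"
    using \<open>S \<subseteq> A \<union> B\<close> subspace_add[OF S] by auto
  then have "(u + v) - v \<in> A \<or> (u + v) - u \<in> B"
    using subspace_diff[OF A] subspace_diff[OF B] by blast
  then show False
    using u v by simp
qed

lemma orthogonal_transformation_image_subspace:
  fixes S T :: "'a::euclidean_space set"
  assumes S: "subspace S" and T: "subspace T" and d: "dim S = dim T"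
  obtains U where "orthogonal_transformation U" "U ` S = T"
proof -
  obtain f where f: "linear f" "f ` S = T" "\<And>x. x \<in> S \<Longrightarrow> norm (f x) = norm x"
    using isometry_subspaces[OF S T d] by metis
  have "dim (S\<^sup>\<bottom>) = dim (T\<^sup>\<bottom>)"
    using dim_orthogonal_comp[OF S] dim_orthogonal_comp[OF T] d by simp
  then obtain g where g: "linear g" "g ` (S\<^sup>\<bottom>) = T\<^sup>\<bottom>" "\<And>x. x \<in> S\<^sup>\<bottom> \<Longrightarrow> norm (g x) = norm x"
    using isometry_subspaces[OF subspace_orthogonal_comp subspace_orthogonal_comp] by metis
  define U where "U x = f (proj_sub S x) + g (x - proj_sub S x)" for x
  have P: "linear (proj_sub S)"
    by (rule linear_proj_sub[OF S])
  have "linear (\<lambda>x. f (proj_sub S x))" "linear (\<lambda>x. g (x - proj_sub S x))"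
    using linear_compose[OF P f(1)] linear_compose[OF linear_compose_sub[OF linear_ident P] g(1)]
    by (simp_all add: o_def)
  then have "linear U"
    unfolding U_def[abs_def] by (rule linear_compose_add)
  moreover have "norm (U x) = norm x" for x
  proof -
    have "f (proj_sub S x) \<in> T"
      using f(2) proj_sub_in[OF S] by blast
    moreover have "g (x - proj_sub S x) \<in> T\<^sup>\<bottom>"
      using g(2) diff_proj_sub_in_orthogonal_comp[OF S] by blast
    ultimately have "orthogonal (f (proj_sub S x)) (g (x - proj_sub S x))"
      by (simp add: orthogonal_comp_def)
    then have "norm (U x) ^ 2 = norm (f (proj_sub S x)) ^ 2 + norm (g (x - proj_sub S x)) ^ 2"
      unfolding U_def by (rule norm_add_Pythagorean)
    also have "\<dots> = norm x ^ 2"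
      using f(3)[OF proj_sub_in[OF S]] g(3)[OF diff_proj_sub_in_orthogonal_comp[OF S]]
        norm_proj_sub_Pythagorean[OF S, of x] by simp
    finally show ?thesis
      by simp
  qed
  moreover have "U ` S = T"
  proof -
    have "U x = f x" if "x \<in> S" for x
      using proj_sub_id[OF S that] linear_0[OF g(1)] by (simp add: U_def)
    then show ?thesis
      using f(2) by (metis image_cong)
  qed
  ultimately show ?thesis
    using that[of U] by (simp add: orthogonal_transformation)
qed

lemma h4_eq_imp_subset:
  assumes G: "subspace G" and K: "subspace K" and eq: "h4 K = h4 G"
  shows "G \<subseteq> K \<or> G \<subseteq> K\<^sup>\<bottom>"
proof -
  have "G \<subseteq> K \<union> K\<^sup>\<bottom>"
    using h4_eq_norm_pow4_iff[OF G] h4_eq_norm_pow4_iff[OF K] eq by auto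
  then show ?thesis
    by (rule subspace_subset_Un_subspaces[OF G K subspace_orthogonal_comp])
qed

lemma h4_eq_imp_dim_le:
  fixes G K :: "'a::euclidean_space set"
  assumes G: "subspace G" and K: "subspace K" and eq: "h4 K = h4 G"
  shows "dim G \<le> dim K \<or> dim G \<le> DIM('a) - dim K"
proof -
  consider "G \<subseteq> K" | "G \<subseteq> K\<^sup>\<bottom>"
    using h4_eq_imp_subset[OF assms] by blast
  then show ?thesis
    using dim_subset[of G K] dim_subset[of G "K\<^sup>\<bottom>"] dim_orthogonal_comp[OF K] by cases auto
qed

lemma h4_eq_imp_dim:
  fixes G K :: "'a::euclidean_space set"
  assumes G: "subspace G" and K: "subspace K" and eq: "h4 K = h4 G"
  shows "dim G = dim K \<or> dim G = DIM('a) - dim K"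
proof -
  have hG: "h4 (G\<^sup>\<bottom>) = h4 K" and hK: "h4 (K\<^sup>\<bottom>) = h4 G"
    using eq h4_orthogonal_comp[OF G] h4_orthogonal_comp[OF K] by simp_all
  note le = h4_eq_imp_dim_le and comp = subspace_orthogonal_comp
  have "dim G \<le> dim K \<or> dim G \<le> DIM('a) - dim K"
       "dim K \<le> dim G \<or> dim K \<le> DIM('a) - dim G"
       "dim (G\<^sup>\<bottom>) \<le> dim K \<or> dim (G\<^sup>\<bottom>) \<le> DIM('a) - dim K"
       "dim (K\<^sup>\<bottom>) \<le> dim G \<or> dim (K\<^sup>\<bottom>) \<le> DIM('a) - dim G"
    using le[OF G K eq] le[OF K G eq[symmetric]] le[OF comp K hG[symmetric]] le[OF comp G hK[symmetric]] .
  moreover have "dim G \<le> DIM('a)" "dim K \<le> DIM('a)"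
    by (simp_all add: dim_subset_UNIV)
  ultimately show ?thesis
    unfolding dim_orthogonal_comp[OF G] dim_orthogonal_comp[OF K] by linarith
qed

lemma h4_eq_uminus_imp_Int_eq_0:
  assumes G: "subspace G" and K: "subspace K" and eq: "h4 K = (\<lambda>x. - h4 G x)"
  shows "G \<inter> K = {0}"
proof -
  have "x = 0" if "x \<in> G" "x \<in> K" for x
  proof -
    have "h4 G x = norm x ^ 4" "h4 K x = norm x ^ 4"
      using that h4_eq_norm_pow4_iff[OF G, of x] h4_eq_norm_pow4_iff[OF K, of x] by simp_all
    then show ?thesis
      using eq by (simp add: fun_eq_iff)
  qed
  then show ?thesis
    using G K by (auto simp: subspace_0)
qed

lemma h4_eq_uminus_imp_dim:
  fixes G K :: "'a::euclidean_space set"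
  assumes G: "subspace G" and K: "subspace K" and eq: "h4 K = (\<lambda>x. - h4 G x)"
  shows "dim G = DIM('a) - dim K"
proof -
  have "dim G + dim K \<le> DIM('a)"
    using dim_add_le_DIM_if_Int_eq_0[OF G K h4_eq_uminus_imp_Int_eq_0[OF assms]] .
  moreover have "dim (G\<^sup>\<bottom>) + dim (K\<^sup>\<bottom>) \<le> DIM('a)"
    using eq by (intro dim_add_le_DIM_if_Int_eq_0 h4_eq_uminus_imp_Int_eq_0)
      (simp_all add: subspace_orthogonal_comp h4_orthogonal_comp G K)
  moreover have "dim G \<le> DIM('a)" "dim K \<le> DIM('a)"
    by (simp_all add: dim_subset_UNIV)
  ultimately show ?thesis
    unfolding dim_orthogonal_comp[OF G] dim_orthogonal_comp[OF K] by linarith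
qed

lemma congruent_fun_h4_imp_dim:
  fixes H1 H2 :: "'a::euclidean_space set"
  assumes H1: "subspace H1" and H2: "subspace H2" and "congruent_fun (h4 H1) (h4 H2)"
  shows "dim H1 = dim H2 \<or> dim H1 = DIM('a) - dim H2"
proof -
  obtain U \<epsilon> where U: "orthogonal_transformation U" and \<epsilon>: "\<epsilon> \<in> {1, -1}"
    and eq: "\<And>x. h4 H2 x = \<epsilon> * h4 H1 (U x)"
    using \<open>congruent_fun (h4 H1) (h4 H2)\<close> unfolding congruent_fun_def by blast
  define G where "G = inv U ` H1"
  have V: "orthogonal_transformation (inv U)"
    by (rule orthogonal_transformation_inv[OF U])
  have G: "subspace G"
    unfolding G_def using H1 V by (simp add: linear_subspace_image orthogonal_transformation_linear)
  have "dim G = dim H1"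
    unfolding G_def
    using orthogonal_transformation_linear[OF V] orthogonal_transformation_inj[OF V]
    by (intro dim_image_eq) (auto intro: inj_on_subset)
  moreover have "h4 H1 (U x) = h4 G x" for x
    using h4_image_orthogonal_transformation[OF V H1, of "U x"] orthogonal_transformation_inj[OF U]
    by (simp add: G_def)
  then have "h4 H2 = (\<lambda>x. \<epsilon> * h4 G x)"
    by (simp add: fun_eq_iff eq)
  ultimately show ?thesis
    using \<epsilon> h4_eq_imp_dim[OF G H2] h4_eq_uminus_imp_dim[OF G H2] by auto
qed

lemma congruent_fun_h4_if_dim_eq:
  fixes H1 H2 :: "'a::euclidean_space set"
  assumes H1: "subspace H1" and H2: "subspace H2" and "dim H1 = dim H2"
  shows "congruent_fun (h4 H1) (h4 H2)"
proof -
  obtain U where U: "orthogonal_transformation U" "U ` H2 = H1"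
    using orthogonal_transformation_image_subspace[OF H2 H1] \<open>dim H1 = dim H2\<close> by metis
  then have "h4 H2 x = 1 * h4 H1 (U x)" for x
    using h4_image_orthogonal_transformation[OF U(1) H2] by simp
  then show ?thesis
    unfolding congruent_fun_def using U(1) by blast
qed

theorem proposition1p2:
  fixes H1 H2 :: "'a::euclidean_space set"
  assumes "subspace H1" and "subspace H2"
  shows "congruent_fun (h4 H1) (h4 H2) \<longleftrightarrow>
           dim H1 = dim H2 \<or> dim H1 = DIM('a) - dim H2"
proof
  show "congruent_fun (h4 H1) (h4 H2) \<Longrightarrow> dim H1 = dim H2 \<or> dim H1 = DIM('a) - dim H2"
    by (rule congruent_fun_h4_imp_dim[OF assms])
next
  assume "dim H1 = dim H2 \<or> dim H1 = DIM('a) - dim H2"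
  then consider "dim H1 = dim H2" | "dim H1 = dim (H2\<^sup>\<bottom>)"
    using dim_orthogonal_comp[OF assms(2)] by auto
  then show "congruent_fun (h4 H1) (h4 H2)"
  proof cases
    case 1
    then show ?thesis
      by (rule congruent_fun_h4_if_dim_eq[OF assms])
  next
    case 2
    then have "congruent_fun (h4 H1) (h4 (H2\<^sup>\<bottom>))"
      by (rule congruent_fun_h4_if_dim_eq[OF assms(1) subspace_orthogonal_comp])
    then show ?thesis
      by (simp only: h4_orthogonal_comp[OF assms(2)])
  qed
qed

end
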